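(* Let $R$ be a supertropical semiring, $V$ a free $R$-module with base $(\varepsilon_i\mid i\in I)$, and $q:V\to R$ a quasilinear quadratic form (i.e. $q(x+y)=q(x)+q(y)$ for all $x,y\in V$). If $x\in V\setminus\{0\}$ is $q$-minimal, then $|\operatorname{supp}(x)|=1$ if $q(x)\in\mathcal T$, and $|\operatorname{supp}(x)|\le2$ if $q(x)\in\mathcal G$.
   Context: All semirings are commutative with $1$. A semiring $R$ is supertropical if $e:=1+1$ satisfies $e+e=e$ and, for all $x,y\in R$: if $ex\neq ey$ then $x+y\in\{x,y\}$, and if $ex=ey$ then $x+y=ey$. $\mathcal T=R\setminus eR$, $\mathcal G=eR\setminus\{0\}$. A quadratic form on an $R$-module $V$ is a map $q:V\to R$ with $q(ax)=a^2q(x)$ such that some symmetric bilinear $b$ satisfies $q(x+y)=q(x)+q(y)+b(x,y)$. Every $R$-module carries the minimal ordering $x\le y\iff\exists z:\ x+z=y$; $x<y$ means $x\le y$, $x\neq y$. A vector $x$ is $q$-minimal if there is no $x'<x$ with $q(x')=q(x)$. For $x=\sum_i x_i\varepsilon_i$, $\operatorname{supp}(x)=\{i: x_i\neq0\}$. *)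

theory Defs
  imports Main
begin

definition supertropical :: "'a::comm_semiring_1 itself \<Rightarrow> bool" where
  "supertropical _ \<longleftrightarrow>
     (let e = (1 + 1 :: 'a) in
        e + e = e \<and>
        (\<forall>x y::'a. (e * x \<noteq> e * y \<longrightarrow> x + y \<in> {x, y}) \<and>
                   (e * x = e * y \<longrightarrow> x + y = e * y)))"

definition ghost_unit :: "'a::comm_semiring_1" where
  "ghost_unit = 1 + 1"

definition tangibles :: "'a::comm_semiring_1 set" where
  "tangibles = UNIV - range (\<lambda>r. ghost_unit * r)"

definition ghosts :: "'a::comm_semiring_1 set" where
  "ghosts = range (\<lambda>r. ghost_unit * r) - {0}"

text \<open>The free module with base indexed by type 'i: finitely supported functions.\<close>
definition freeV :: "('i \<Rightarrow> 'a::comm_semiring_1) set" where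
  "freeV = {x. finite {i. x i \<noteq> 0}}"

definition vadd :: "('i \<Rightarrow> 'a::comm_semiring_1) \<Rightarrow> ('i \<Rightarrow> 'a) \<Rightarrow> ('i \<Rightarrow> 'a)" where
  "vadd x y = (\<lambda>i. x i + y i)"

definition vsmult :: "'a::comm_semiring_1 \<Rightarrow> ('i \<Rightarrow> 'a) \<Rightarrow> ('i \<Rightarrow> 'a)" where
  "vsmult a x = (\<lambda>i. a * x i)"

definition vzero :: "'i \<Rightarrow> 'a::comm_semiring_1" where
  "vzero = (\<lambda>i. 0)"

definition supp :: "('i \<Rightarrow> 'a::comm_semiring_1) \<Rightarrow> 'i set" where
  "supp x = {i. x i \<noteq> 0}"

definition symmetric_bilinear ::
  "(('i \<Rightarrow> 'a::comm_semiring_1) \<Rightarrow> ('i \<Rightarrow> 'a) \<Rightarrow> 'a) \<Rightarrow> bool" where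
  "symmetric_bilinear b \<longleftrightarrow>
     (\<forall>x\<in>freeV. \<forall>y\<in>freeV. b x y = b y x) \<and>
     (\<forall>x\<in>freeV. \<forall>x'\<in>freeV. \<forall>y\<in>freeV. b (vadd x x') y = b x y + b x' y) \<and>
     (\<forall>a. \<forall>x\<in>freeV. \<forall>y\<in>freeV. b (vsmult a x) y = a * b x y)"

definition quadratic_form :: "(('i \<Rightarrow> 'a::comm_semiring_1) \<Rightarrow> 'a) \<Rightarrow> bool" where
  "quadratic_form q \<longleftrightarrow>
     (\<forall>a. \<forall>x\<in>freeV. q (vsmult a x) = a ^ 2 * q x) \<and>
     (\<exists>b. symmetric_bilinear b \<and>
          (\<forall>x\<in>freeV. \<forall>y\<in>freeV. q (vadd x y) = q x + q y + b x y))"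

definition quasilinear :: "(('i \<Rightarrow> 'a::comm_semiring_1) \<Rightarrow> 'a) \<Rightarrow> bool" where
  "quasilinear q \<longleftrightarrow> (\<forall>x\<in>freeV. \<forall>y\<in>freeV. q (vadd x y) = q x + q y)"

definition vle :: "('i \<Rightarrow> 'a::comm_semiring_1) \<Rightarrow> ('i \<Rightarrow> 'a) \<Rightarrow> bool" where
  "vle x y \<longleftrightarrow> (\<exists>z\<in>freeV. vadd x z = y)"

definition vless :: "('i \<Rightarrow> 'a::comm_semiring_1) \<Rightarrow> ('i \<Rightarrow> 'a) \<Rightarrow> bool" where
  "vless x y \<longleftrightarrow> vle x y \<and> x \<noteq> y"

definition q_minimal :: "(('i \<Rightarrow> 'a::comm_semiring_1) \<Rightarrow> 'a) \<Rightarrow> ('i \<Rightarrow> 'a) \<Rightarrow> bool" where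
  "q_minimal q x \<longleftrightarrow> \<not> (\<exists>x'\<in>freeV. vless x' x \<and> q x' = q x)"

end

theory Submission
  imports Defs
begin

text \<open>By quasilinearity, q x is the sum of the values q (x_i e_i) over the support of x.
  In a supertropical semiring a finite sum already equals one of its summands or, if it is a
  ghost, the sum of two of them. Restricting x to those one or two coordinates gives a vector
  below x with the same q-value, so minimality forces the support of x to consist of exactly
  these coordinates.\<close>

lemma supertropical_add:
  assumes "supertropical TYPE('a::comm_semiring_1)"
  shows supertropical_add_distinct: "\<And>x y::'a. ghost_unit * x \<noteq> ghost_unit * y \<Longrightarrow> x + y \<in> {x, y}"
    and supertropical_add_equiv: "\<And>x y::'a. ghost_unit * x = ghost_unit * y \<Longrightarrow> x + y = ghost_unit * y"
  using assms unfolding supertropical_def ghost_unit_def Let_def by blast+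

lemma supertropical_ghost_unit_idem:
  assumes "supertropical TYPE('a::comm_semiring_1)"
  shows "(ghost_unit::'a) * ghost_unit = ghost_unit"
proof -
  have "(1 + 1::'a) + (1 + 1) = 1 + 1"
    using assms unfolding supertropical_def Let_def by blast
  then show ?thesis
    unfolding ghost_unit_def by (simp add: distrib_left distrib_right)
qed

lemma ghost_unit_mult_ghost:
  assumes "supertropical TYPE('a::comm_semiring_1)" and "(y::'a) \<notin> tangibles"
  shows "ghost_unit * y = y"
proof -
  obtain r where "y = ghost_unit * r"
    using assms(2) unfolding tangibles_def by blast
  then show ?thesis
    using supertropical_ghost_unit_idem[OF assms(1)] by (simp add: mult.assoc[symmetric])
qed

lemma supertropical_sum_attained:
  fixes f :: "'i \<Rightarrow> 'a::comm_semiring_1"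
  assumes st: "supertropical TYPE('a)" and "finite S" "S \<noteq> {}"
  shows "(\<exists>i\<in>S. sum f S = f i) \<or>
         (\<exists>i\<in>S. \<exists>j\<in>S. i \<noteq> j \<and> sum f S = f i + f j \<and> sum f S \<notin> tangibles)"
  using assms(2,3)
proof (induction S rule: finite_ne_induct)
  case (singleton i)
  then show ?case by simp
next
  case (insert k S)
  have sum_insert: "sum f (insert k S) = f k + sum f S"
    using insert by simp
  from insert.IH show ?case
  proof
    assume "\<exists>i\<in>S. sum f S = f i"
    then obtain i where i: "i \<in> S" "sum f S = f i" by blast
    show ?case
    proof (cases "ghost_unit * f k = ghost_unit * f i")
      case True
      then have "sum f (insert k S) = f k + f i \<and> sum f (insert k S) \<notin> tangibles"
        using sum_insert i supertropical_add_equiv[OF st] unfolding tangibles_def by auto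
      moreover have "k \<noteq> i" using i insert by auto
      ultimately show ?thesis using i by blast
    next
      case False
      then show ?thesis
        using sum_insert i supertropical_add_distinct[OF st] by auto
    qed
  next
    assume "\<exists>i\<in>S. \<exists>j\<in>S. i \<noteq> j \<and> sum f S = f i + f j \<and> sum f S \<notin> tangibles"
    then obtain i j where ij: "i \<in> S" "j \<in> S" "i \<noteq> j" "sum f S = f i + f j"
      and ghost: "sum f S \<notin> tangibles" by blast
    have keep_pair: ?case if "sum f (insert k S) = sum f S"
    proof -
      have "i \<in> insert k S" "j \<in> insert k S" using ij by simp_all
      moreover have "sum f (insert k S) = f i + f j" "sum f (insert k S) \<notin> tangibles"
        using that ij ghost by simp_all
      ultimately show ?case using \<open>i \<noteq> j\<close> by blast
    qed
    show ?case
    proof (cases "ghost_unit * f k = ghost_unit * sum f S")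
      case True
      \<comment> \<open>A ghost absorbs every summand of the same ghost value.\<close>
      then have "sum f (insert k S) = sum f S"
        using sum_insert supertropical_add_equiv[OF st] ghost_unit_mult_ghost[OF st ghost]
        by simp
      then show ?thesis by (rule keep_pair)
    next
      case False
      then have "sum f (insert k S) = f k \<or> sum f (insert k S) = sum f S"
        using sum_insert supertropical_add_distinct[OF st] by simp
      then show ?thesis
      proof
        assume "sum f (insert k S) = f k"
        then show ?thesis using insertI1 by blast
      qed (rule keep_pair)
    qed
  qed
qed

definition restr :: "('i \<Rightarrow> 'a::comm_semiring_1) \<Rightarrow> 'i set \<Rightarrow> 'i \<Rightarrow> 'a" where
  "restr x T = (\<lambda>j. if j \<in> T then x j else 0)"

lemma restr_in_freeV: "x \<in> freeV \<Longrightarrow> restr x T \<in> freeV"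
  unfolding freeV_def restr_def by (auto elim: finite_subset[rotated])

lemma restr_supp [simp]: "restr x (supp x) = x"
  unfolding restr_def supp_def by auto

lemma vle_restr:
  assumes "x \<in> freeV"
  shows "vle (restr x T) x"
proof -
  have "vadd (restr x T) (restr x (- T)) = x"
    unfolding vadd_def restr_def by auto
  then show ?thesis
    using restr_in_freeV[OF assms] unfolding vle_def by blast
qed

lemma quadratic_form_zero:
  assumes "quadratic_form q"
  shows "q vzero = 0"
proof -
  have "vzero \<in> freeV" unfolding freeV_def vzero_def by simp
  then have "q (vsmult 0 vzero) = 0 ^ 2 * q vzero"
    using assms unfolding quadratic_form_def by blast
  moreover have "vsmult 0 vzero = vzero"
    unfolding vsmult_def vzero_def by simp
  ultimately show ?thesis by (metis mult_zero_left zero_power2)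
qed

lemma quasilinear_restr_sum:
  fixes q :: "('i \<Rightarrow> 'a::comm_semiring_1) \<Rightarrow> 'a"
  assumes "quadratic_form q" "quasilinear q" "x \<in> freeV" "finite T"
  shows "q (restr x T) = (\<Sum>i\<in>T. q (restr x {i}))"
  using assms(4)
proof (induction T rule: finite_induct)
  case empty
  have "restr x {} = vzero" unfolding restr_def vzero_def by simp
  then show ?case using quadratic_form_zero[OF assms(1)] by simp
next
  case (insert k T)
  have "restr x (insert k T) = vadd (restr x {k}) (restr x T)"
    using insert unfolding vadd_def restr_def by auto
  then have "q (restr x (insert k T)) = q (restr x {k}) + q (restr x T)"
    using assms(2) restr_in_freeV[OF assms(3)] unfolding quasilinear_def by simp
  then show ?case using insert by simp
qed

lemma q_minimal_restr_eq_supp: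
  assumes "q_minimal q x" "x \<in> freeV" "T \<subseteq> supp x" "q (restr x T) = q x"
  shows "T = supp x"
proof -
  have "\<not> vless (restr x T) x"
    using assms(1,4) restr_in_freeV[OF assms(2)] unfolding q_minimal_def by blast
  then have restr_eq: "restr x T = x"
    using vle_restr[OF assms(2)] unfolding vless_def by blast
  have "supp x \<subseteq> T"
  proof
    fix j assume "j \<in> supp x"
    then have "restr x T j \<noteq> 0" using restr_eq by (simp add: supp_def)
    then show "j \<in> T" by (simp add: restr_def split: if_splits)
  qed
  then show ?thesis using assms(3) by blast
qed

theorem corollary6p5:
  fixes q :: "('i \<Rightarrow> 'a::comm_semiring_1) \<Rightarrow> 'a"
    and x :: "'i \<Rightarrow> 'a"
  assumes "supertropical TYPE('a)"
    and "quadratic_form q"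
    and "quasilinear q"
    and "x \<in> freeV" and "x \<noteq> vzero"
    and "q_minimal q x"
  shows "(q x \<in> tangibles \<longrightarrow> card (supp x) = 1) \<and>
         (q x \<in> ghosts \<longrightarrow> card (supp x) \<le> 2)"
proof -
  define f where "f i = q (restr x {i})" for i
  have fin: "finite (supp x)" using assms(4) unfolding freeV_def supp_def by simp
  have ne: "supp x \<noteq> {}" using assms(5) unfolding supp_def vzero_def by auto
  have q_restr: "q (restr x T) = sum f T" if "finite T" for T
    using quasilinear_restr_sum[OF assms(2-4) that] unfolding f_def .
  have qx: "q x = sum f (supp x)"
    using q_restr[OF fin] by simp
  have supp_eq: "supp x = T" if "T \<subseteq> supp x" "sum f T = q x" for T
  proof -
    have "q (restr x T) = q x"
      using q_restr[OF finite_subset[OF that(1) fin]] that(2) by simp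
    then show ?thesis
      using q_minimal_restr_eq_supp[OF assms(6,4) that(1)] by simp
  qed
  from supertropical_sum_attained[OF assms(1) fin ne, of f] show ?thesis
  proof
    assume "\<exists>i\<in>supp x. sum f (supp x) = f i"
    then obtain i where i: "i \<in> supp x" "sum f (supp x) = f i" by blast
    then have "supp x = {i}" using supp_eq[of "{i}"] qx by simp
    then show ?thesis by simp
  next
    assume "\<exists>i\<in>supp x. \<exists>j\<in>supp x. i \<noteq> j \<and> sum f (supp x) = f i + f j \<and>
      sum f (supp x) \<notin> tangibles"
    then obtain i j where ij: "i \<in> supp x" "j \<in> supp x" "i \<noteq> j"
      "sum f (supp x) = f i + f j" and ghost: "sum f (supp x) \<notin> tangibles" by blast
    then have "supp x = {i, j}" using supp_eq[of "{i, j}"] qx by simp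
    then show ?thesis using ghost qx \<open>i \<noteq> j\<close> by simp
  qed
qed

end
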